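(* Let $\rho$ be a growth function, $m\ge1$ and $0\le k\le m$ integers, and $\sigma\in\{-1,1\}^m$ with $|\sigma|=k$. Define $\theta\in\{-1,1\}^m$ by $\theta_i=1$ for $1\le i\le k$ and $\theta_i=-1$ for $k+1\le i\le m$. If $f^\rho_\sigma=(a_\sigma,b_\sigma)$ and $f^\rho_\theta=(a_\theta,b_\theta)$, then $a_\sigma\le a_\theta$ and $b_\sigma=b_\theta$.
   Context: A growth function is an increasing $\rho:\mathbb{R}\to\mathbb{R}^{\ge0}$. Binary strings are elements of $\{-1,1\}^m$ (the empty string $<>$ for $m=0$); $|\sigma|$ is the number of coordinates equal to $1$; $\sigma\wedge u$ denotes concatenation. $f^\rho_\sigma\in\mathbb{R}^2$ is defined recursively: $f^\rho_{<>}=(0,0)$, and if $f^\rho_\sigma=(a,b)$ then $f^\rho_{\sigma\wedge1}=(a+1,b+1)$ and $f^\rho_{\sigma\wedge-1}=(a+\rho(a+b),b-1)$. *)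

theory Defs
  imports Complex_Main
begin

definition growth_function :: "(real \<Rightarrow> real) \<Rightarrow> bool" where
  "growth_function \<rho> \<longleftrightarrow> mono \<rho> \<and> (\<forall>x. 0 \<le> \<rho> x)"

text \<open>Binary strings: lists over {-1,1}; the list head is coordinate 1.\<close>
definition binary_string :: "int list \<Rightarrow> bool" where
  "binary_string \<sigma> \<longleftrightarrow> set \<sigma> \<subseteq> {-1, 1}"

definition ones :: "int list \<Rightarrow> nat" where
  "ones \<sigma> = length (filter (\<lambda>x. x = 1) \<sigma>)"

definition fstep :: "(real \<Rightarrow> real) \<Rightarrow> real \<times> real \<Rightarrow> int \<Rightarrow> real \<times> real" where
  "fstep \<rho> p u = (case p of (a, b) \<Rightarrow>
     if u = 1 then (a + 1, b + 1) else (a + \<rho> (a + b), b - 1))"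

definition f_rho :: "(real \<Rightarrow> real) \<Rightarrow> int list \<Rightarrow> real \<times> real" where
  "f_rho \<rho> \<sigma> = foldl (fstep \<rho>) (0, 0) \<sigma>"

lemma f_rho_Nil: "f_rho \<rho> [] = (0, 0)"
  by (simp add: f_rho_def)

lemma f_rho_snoc: "f_rho \<rho> (\<sigma> @ [u]) = fstep \<rho> (f_rho \<rho> \<sigma>) u"
  by (simp add: f_rho_def)

end

theory Submission
  imports Defs
begin

text \<open>Both sides of the theorem have the same second coordinate, which only counts ones minus
  minus-ones. For the first coordinate, scan the string from the left: a leading \<open>-1\<close> followed
  (after sorting the rest by induction) by a block \<open>1\<^sup>k\<close> can be moved behind that block. This
  leaves the second coordinate unchanged, while the increment \<open>\<rho>(a + b)\<close> of the first coordinate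
  becomes \<open>\<rho>(a + b + 2k)\<close>, which is at least as large since \<open>\<rho>\<close> is monotone; and the recursion
  is monotone in the first coordinate of its starting point.\<close>

definition below_fst_eq_snd :: "real \<times> real \<Rightarrow> real \<times> real \<Rightarrow> bool" where
  "below_fst_eq_snd p q \<longleftrightarrow> fst p \<le> fst q \<and> snd p = snd q"

lemma below_fst_eq_snd_refl: "below_fst_eq_snd p p"
  by (simp add: below_fst_eq_snd_def)

lemma below_fst_eq_snd_trans:
  "below_fst_eq_snd p q \<Longrightarrow> below_fst_eq_snd q r \<Longrightarrow> below_fst_eq_snd p r"
  by (auto simp: below_fst_eq_snd_def)

lemma fstep_below_fst_eq_snd_mono:
  assumes "mono \<rho>" and "below_fst_eq_snd p q"
  shows "below_fst_eq_snd (fstep \<rho> p u) (fstep \<rho> q u)"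
proof -
  obtain a b a' where p: "p = (a, b)" and q: "q = (a', b)" and "a \<le> a'"
    using assms(2) by (cases p, cases q) (auto simp: below_fst_eq_snd_def)
  then have "\<rho> (a + b) \<le> \<rho> (a' + b)"
    using assms(1) by (simp add: monoD)
  with \<open>a \<le> a'\<close> show ?thesis
    by (simp add: p q fstep_def below_fst_eq_snd_def)
qed

lemma foldl_fstep_below_fst_eq_snd_mono:
  assumes "mono \<rho>" and "below_fst_eq_snd p q"
  shows "below_fst_eq_snd (foldl (fstep \<rho>) p s) (foldl (fstep \<rho>) q s)"
  using assms(2)
  by (induction s arbitrary: p q) (simp_all add: fstep_below_fst_eq_snd_mono[OF assms(1)])

lemma foldl_fstep_replicate_one:
  "foldl (fstep \<rho>) (a, b) (replicate k 1) = (a + real k, b + real k)"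
  by (induction k arbitrary: a b) (auto simp: fstep_def algebra_simps)

lemma fstep_minus_one_before_ones:
  assumes "mono \<rho>"
  shows "below_fst_eq_snd (foldl (fstep \<rho>) (fstep \<rho> p (-1)) (replicate k 1))
                          (fstep \<rho> (foldl (fstep \<rho>) p (replicate k 1)) (-1))"
proof -
  obtain a b where p: "p = (a, b)"
    by (cases p)
  have "\<rho> (a + b) \<le> \<rho> (a + real k + (b + real k))"
    using assms by (simp add: monoD)
  then show ?thesis
    by (simp add: p fstep_def foldl_fstep_replicate_one below_fst_eq_snd_def)
qed

lemma foldl_fstep_below_sorted:
  assumes "mono \<rho>" and "set s \<subseteq> {-1, 1}"
  shows "below_fst_eq_snd (foldl (fstep \<rho>) p s)
           (foldl (fstep \<rho>) p (replicate (ones s) 1 @ replicate (length s - ones s) (-1)))"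
  using assms(2)
proof (induction s arbitrary: p)
  case Nil
  then show ?case
    by (simp add: ones_def below_fst_eq_snd_refl)
next
  case (Cons u s)
  then have IH: "\<And>p. below_fst_eq_snd (foldl (fstep \<rho>) p s)
      (foldl (fstep \<rho>) p (replicate (ones s) 1 @ replicate (length s - ones s) (-1)))"
    by simp
  have ones_le: "ones s \<le> length s"
    by (simp add: ones_def)
  consider "u = 1" | "u = -1"
    using Cons.prems by auto
  then show ?case
  proof cases
    case 1
    then show ?thesis
      using IH[of "fstep \<rho> p 1"] by (simp add: ones_def)
  next
    case 2
    define k where "k = ones s"
    define r where "r = replicate (length s - k) (-1 :: int)"
    have sorted_eq: "replicate (ones (u # s)) 1 @ replicate (length (u # s) - ones (u # s)) (-1)
        = replicate k 1 @ (-1) # r"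
      using 2 ones_le by (simp add: k_def r_def ones_def Suc_diff_le)
    have "below_fst_eq_snd (foldl (fstep \<rho>) (fstep \<rho> p (-1)) s)
        (foldl (fstep \<rho>) (foldl (fstep \<rho>) (fstep \<rho> p (-1)) (replicate k 1)) r)"
      using IH[of "fstep \<rho> p (-1)"] by (simp add: k_def r_def)
    moreover have "below_fst_eq_snd
        (foldl (fstep \<rho>) (foldl (fstep \<rho>) (fstep \<rho> p (-1)) (replicate k 1)) r)
        (foldl (fstep \<rho>) (fstep \<rho> (foldl (fstep \<rho>) p (replicate k 1)) (-1)) r)"
      by (rule foldl_fstep_below_fst_eq_snd_mono[OF assms(1) fstep_minus_one_before_ones[OF assms(1)]])
    ultimately show ?thesis
      unfolding sorted_eq using 2 by (simp add: below_fst_eq_snd_trans)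
  qed
qed

theorem mainTheorem17:
  fixes \<rho> :: "real \<Rightarrow> real" and m k :: nat and \<sigma> :: "int list"
  assumes "growth_function \<rho>"
    and "m \<ge> 1" and "k \<le> m"
    and "binary_string \<sigma>" and "length \<sigma> = m" and "ones \<sigma> = k"
  shows "fst (f_rho \<rho> \<sigma>) \<le> fst (f_rho \<rho> (replicate k 1 @ replicate (m - k) (-1)))
       \<and> snd (f_rho \<rho> \<sigma>) = snd (f_rho \<rho> (replicate k 1 @ replicate (m - k) (-1)))"
proof -
  have "mono \<rho>" and "set \<sigma> \<subseteq> {-1, 1}"
    using assms(1,4) by (simp_all add: growth_function_def binary_string_def)
  from foldl_fstep_below_sorted[OF this, of "(0, 0)"] show ?thesis
    using assms(5,6) by (simp add: f_rho_def below_fst_eq_snd_def)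
qed

end
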